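(* Let $C\subseteq 2^X$ be a maximum class of VC-dimension $d$ and let $D\subseteq C$ be a maximum class (on the same domain $X$) of VC-dimension $d-1$. Then each $c\in C\setminus D$ is the source of a unique incomplete cube for $(C,D)$. Moreover, if $r':D\to X(D)$ is a representation map for $D$ and $r:C\to X(C)$ extends $r'$ by setting $r(c)=\mathrm{supp}(s^{-1}(c))$ for each $c\in C\setminus D$ (where $s^{-1}(c)$ is the unique incomplete cube with source $c$), then $r$ is a representation map for $C$.
   Context: $X$ is a finite set, $n=|X|$; concepts $c\subseteq X$ are identified with characteristic functions, $c|Y$ is the restriction to $Y$ and $C|Y=\{c|Y:c\in C\}$. $Y$ is shattered by $C$ if $C|Y=2^Y$; VC-dimension is the maximum size of a shattered set; $C$ is maximum if $|C|=\sum_{i=0}^d\binom{n}{i}$ with $d$ its VC-dimension. $X(C)$ is the family of sets shattered by $C$. A cube of $2^X$ is $\{T\cup Z:Z\subseteq Y\}$ with $Y\subseteq X$, $T\subseteq X\setminus Y$, support $\mathrm{supp}=Y$; a cube of $C$ is a cube contained in $C$. A missed simplex for $(C,D)$ is a set $\sigma\in X(C)\setminus X(D)$ (it has size $d$). An incomplete cube for $(C,D)$ is a cube $Q$ of $C$ whose support is a missed simplex; its source $s(Q)$ is the unique $c\in Q$ with $c|\mathrm{supp}(Q)\notin D|\mathrm{supp}(Q)$. A representation map for a class $E$ with $|E|=|X(E)|$ is a bijection $r:E\to X(E)$ with $c|(r(c)\cup r(c'))\ne c'|(r(c)\cup r(c'))$ for all distinct $c,c'\in E$. *)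

theory Defs
  imports Main
begin

text \<open>Concepts over a finite domain X are subsets c of X; the restriction c|Y is
  represented by c \<inter> Y (characteristic function restricted to Y).\<close>

definition restr :: "'a set set \<Rightarrow> 'a set \<Rightarrow> 'a set set" where
  "restr C Y = (\<lambda>c. c \<inter> Y) ` C"

definition shatters :: "'a set set \<Rightarrow> 'a set \<Rightarrow> bool" where
  "shatters C Y \<longleftrightarrow> restr C Y = Pow Y"

definition shattered_sets :: "'a set \<Rightarrow> 'a set set \<Rightarrow> 'a set set" where
  "shattered_sets X C = {Y. Y \<subseteq> X \<and> shatters C Y}"

definition vc_dim_is :: "'a set \<Rightarrow> 'a set set \<Rightarrow> nat \<Rightarrow> bool" where
  "vc_dim_is X C d \<longleftrightarrow>
     (\<exists>Y\<in>shattered_sets X C. card Y = d) \<and> (\<forall>Y\<in>shattered_sets X C. card Y \<le> d)"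

definition maximum_class :: "'a set \<Rightarrow> 'a set set \<Rightarrow> nat \<Rightarrow> bool" where
  "maximum_class X C d \<longleftrightarrow> C \<subseteq> Pow X \<and> vc_dim_is X C d \<and>
     card C = (\<Sum>i\<le>d. card X choose i)"

definition cube :: "'a set \<Rightarrow> 'a set \<Rightarrow> 'a set set" where
  "cube T Y = {T \<union> Z | Z. Z \<subseteq> Y}"

definition is_cube :: "'a set \<Rightarrow> 'a set \<Rightarrow> 'a set \<Rightarrow> bool" where
  "is_cube X T Y \<longleftrightarrow> Y \<subseteq> X \<and> T \<subseteq> X - Y"

definition incomplete_cube :: "'a set \<Rightarrow> 'a set set \<Rightarrow> 'a set set \<Rightarrow> 'a set \<Rightarrow> 'a set \<Rightarrow> bool" where
  "incomplete_cube X C D T Y \<longleftrightarrow> is_cube X T Y \<and> cube T Y \<subseteq> C \<and>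
     Y \<in> shattered_sets X C - shattered_sets X D"

definition is_source :: "'a set \<Rightarrow> 'a set set \<Rightarrow> 'a set set \<Rightarrow> 'a set \<Rightarrow> 'a set \<Rightarrow> 'a set \<Rightarrow> bool" where
  "is_source X C D T Y c \<longleftrightarrow> incomplete_cube X C D T Y \<and> c \<in> cube T Y \<and>
     c \<inter> Y \<notin> restr D Y"

definition representation_map :: "'a set \<Rightarrow> 'a set set \<Rightarrow> ('a set \<Rightarrow> 'a set) \<Rightarrow> bool" where
  "representation_map X E r \<longleftrightarrow> bij_betw r E (shattered_sets X E) \<and>
     (\<forall>c\<in>E. \<forall>c'\<in>E. c \<noteq> c' \<longrightarrow> c \<inter> (r c \<union> r c') \<noteq> c' \<inter> (r c \<union> r c'))"

end

theory Submission
  imports Defs "Jordan_Normal_Form.Determinant"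
begin

text \<open>
  Maximum classes are stable under restriction to a subdomain and under the reduction
  \<open>C\<^sup>x = {c \<in> C. x \<notin> c \<and> c \<union> {x} \<in> C}\<close>, which lowers the dimension by one. By induction on
  \<open>d\<close>, every \<open>d\<close>-subset \<open>Y\<close> of \<open>X\<close> is therefore the support of a cube of \<open>C\<close>; as \<open>D\<close> does not
  shatter \<open>Y\<close>, some vertex of that cube has a pattern on \<open>Y\<close> missing from \<open>D\<close>, so it is a source.

  Choose one source \<open>s Y\<close> for every \<open>d\<close>-set \<open>Y\<close>. Let \<open>A\<close> carry the alternating signs
  \<open>(-1)\<^bsup>|Y - c|\<^esup>\<close> on the chosen cube at \<open>Y\<close>, and let \<open>B\<close> record (with a sign) which \<open>c \<in> C - D\<close>
  agree with \<open>s Y\<close> on \<open>Y\<close>. Inclusion-exclusion gives \<open>A B = I\<close>. Since \<open>|C - D| = (n choose d)\<close>,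
  the matrices are square, hence \<open>B A = I\<close>, and the diagonal of \<open>B A\<close> shows that every
  \<open>c \<in> C - D\<close> is some \<open>s Y\<close>. So every choice \<open>s\<close> is a bijection onto \<open>C - D\<close>, which forces
  each \<open>c \<in> C - D\<close> to be the source of exactly one incomplete cube.

  For the representation map, two elements of \<open>C - D\<close> that agreed on the union \<open>Z\<close> of their
  supports would restrict to a common source of two incomplete cubes with different supports
  for the restrictions of \<open>C\<close> and \<open>D\<close> to \<open>Z\<close>, which are again maximum.
\<close>

section \<open>Shattering and the two halves of a class\<close>

lemma shatters_iff: "shatters C Y \<longleftrightarrow> (\<forall>Z\<subseteq>Y. \<exists>c\<in>C. c \<inter> Y = Z)"
proof
  assume "shatters C Y"
  then show "\<forall>Z\<subseteq>Y. \<exists>c\<in>C. c \<inter> Y = Z" unfolding shatters_def restr_def by (metis PowI imageE)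
next
  assume "\<forall>Z\<subseteq>Y. \<exists>c\<in>C. c \<inter> Y = Z"
  then have "Pow Y \<subseteq> (\<lambda>c. c \<inter> Y) ` C" by (auto simp: image_iff)
  then show "shatters C Y" unfolding shatters_def restr_def by auto
qed

lemma finite_shattered_sets: "finite X \<Longrightarrow> finite (shattered_sets X C)"
  unfolding shattered_sets_def by (rule finite_subset[of _ "Pow X"]) auto

lemma shatters_empty_iff: "shatters C {} \<longleftrightarrow> C \<noteq> {}"
  unfolding shatters_iff by auto

lemma shatters_mono: "C \<subseteq> C' \<Longrightarrow> shatters C Y \<Longrightarrow> shatters C' Y"
  unfolding shatters_iff by (meson subsetD)

definition lower_half :: "'a \<Rightarrow> 'a set set \<Rightarrow> 'a set set" where
  "lower_half x C = {c \<in> C. x \<notin> c}"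

definition upper_half :: "'a \<Rightarrow> 'a set set \<Rightarrow> 'a set set" where
  "upper_half x C = (\<lambda>c. c - {x}) ` {c \<in> C. x \<in> c}"

text \<open>\<^term>\<open>lower_half x C \<union> upper_half x C\<close> is the restriction of \<open>C\<close> to \<open>X - {x}\<close>, and
  \<^term>\<open>lower_half x C \<inter> upper_half x C\<close> is the reduction \<open>C\<^sup>x\<close>.\<close>

lemma mem_upper_half_iff: "a \<in> upper_half x C \<longleftrightarrow> x \<notin> a \<and> insert x a \<in> C"
proof
  assume "a \<in> upper_half x C"
  then obtain c where "c \<in> C" "x \<in> c" "a = c - {x}" unfolding upper_half_def by blast
  then show "x \<notin> a \<and> insert x a \<in> C" by (simp add: insert_absorb)
next
  assume "x \<notin> a \<and> insert x a \<in> C"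
  then show "a \<in> upper_half x C" unfolding upper_half_def by (force intro: image_eqI[of _ _ "insert x a"])
qed

lemma mem_reduction_iff:
  "a \<in> lower_half x C \<inter> upper_half x C \<longleftrightarrow> a \<in> C \<and> x \<notin> a \<and> insert x a \<in> C"
  by (auto simp: mem_upper_half_iff lower_half_def)

lemma card_lower_upper_half:
  assumes "finite C" shows "card C = card (lower_half x C) + card (upper_half x C)"
proof -
  have "inj_on (\<lambda>c. c - {x}) {c \<in> C. x \<in> c}"
    by (auto simp: inj_on_def)
  then have "card (upper_half x C) = card {c \<in> C. x \<in> c}"
    unfolding upper_half_def by (rule card_image)
  moreover have "C = lower_half x C \<union> {c \<in> C. x \<in> c}"
    and "lower_half x C \<inter> {c \<in> C. x \<in> c} = {}" unfolding lower_half_def by auto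
  ultimately show ?thesis using assms by (metis card_Un_disjoint finite_Un)
qed

lemma shatters_of_upper_half:
  assumes "shatters (upper_half x C) S" "x \<notin> S" shows "shatters C S"
  unfolding shatters_iff
proof (intro allI impI)
  fix Z assume "Z \<subseteq> S"
  then obtain a where "a \<in> upper_half x C" "a \<inter> S = Z"
    using assms(1) unfolding shatters_iff by blast
  then have "x \<notin> a" "insert x a \<in> C" "a \<inter> S = Z" unfolding mem_upper_half_iff by auto
  then show "\<exists>c\<in>C. c \<inter> S = Z" using assms(2) by (intro bexI[of _ "insert x a"]) auto
qed

lemma shatters_insert_of_halves:
  assumes "shatters (lower_half x C) S" "shatters (upper_half x C) S" "x \<notin> S"
  shows "shatters C (insert x S)"
  unfolding shatters_iff
proof (intro allI impI)
  fix Z assume Z: "Z \<subseteq> insert x S"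
  show "\<exists>c\<in>C. c \<inter> insert x S = Z"
  proof (cases "x \<in> Z")
    case True
    have "Z - {x} \<subseteq> S" using Z by auto
    then obtain a where "a \<in> upper_half x C" "a \<inter> S = Z - {x}"
      using assms(2) unfolding shatters_iff by blast
    then have "x \<notin> a" "insert x a \<in> C" "a \<inter> S = Z - {x}" unfolding mem_upper_half_iff by auto
    then show ?thesis using True assms(3) by (intro bexI[of _ "insert x a"]) auto
  next
    case False
    then have "Z \<subseteq> S" using Z by auto
    then obtain c where "c \<in> lower_half x C" "c \<inter> S = Z"
      using assms(1) unfolding shatters_iff by blast
    then have "c \<in> C" "x \<notin> c" "c \<inter> S = Z" unfolding lower_half_def by auto
    then show ?thesis by (intro bexI[of _ c]) auto
  qed
qed

lemma shattered_sets_insert_supset: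
  fixes C :: "'a set set"
  assumes "x \<notin> F"
  defines "S0 \<equiv> shattered_sets F (lower_half x C)" and "S1 \<equiv> shattered_sets F (upper_half x C)"
  shows "S0 \<union> S1 \<union> insert x ` (S0 \<inter> S1) \<subseteq> shattered_sets (insert x F) C"
proof (intro subsetI)
  fix S assume "S \<in> S0 \<union> S1 \<union> insert x ` (S0 \<inter> S1)"
  then consider "S \<in> S0" | "S \<in> S1" | S' where "S' \<in> S0" "S' \<in> S1" "S = insert x S'" by blast
  then show "S \<in> shattered_sets (insert x F) C"
  proof cases
    case 1
    moreover have "lower_half x C \<subseteq> C" unfolding lower_half_def by auto
    ultimately show ?thesis using shatters_mono[of "lower_half x C" C S]
      unfolding S0_def shattered_sets_def by auto
  next
    case 2
    then have "S \<subseteq> F" "shatters (upper_half x C) S" unfolding S1_def shattered_sets_def by auto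
    moreover from this(1) have "x \<notin> S" using assms(1) by auto
    ultimately show ?thesis using shatters_of_upper_half[of x C S] unfolding shattered_sets_def by auto
  next
    case 3
    then have "S' \<subseteq> F" "shatters (lower_half x C) S'" "shatters (upper_half x C) S'"
      unfolding S0_def S1_def shattered_sets_def by auto
    moreover from this(1) have "x \<notin> S'" using assms(1) by auto
    ultimately show ?thesis using shatters_insert_of_halves[of x C S'] \<open>S = insert x S'\<close>
      unfolding shattered_sets_def by auto
  qed
qed

lemma card_Un_insert_image_Int:
  assumes "finite S0" "finite S1" "\<And>S. S \<in> S0 \<union> S1 \<Longrightarrow> x \<notin> S"
  shows "card (S0 \<union> S1 \<union> insert x ` (S0 \<inter> S1)) = card S0 + card S1"
proof -
  have "inj_on (insert x) (S0 \<inter> S1)"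
    using assms(3) by (intro inj_onI) (metis Diff_insert_absorb IntD1 UnI1)
  moreover have "(S0 \<union> S1) \<inter> insert x ` (S0 \<inter> S1) = {}" using assms(3) by auto
  ultimately show ?thesis
    using assms(1,2) card_Un_Int[OF assms(1,2)] by (simp add: card_Un_disjoint card_image)
qed

lemma card_le_card_shattered_sets:
  "finite X \<Longrightarrow> C \<subseteq> Pow X \<Longrightarrow> card C \<le> card (shattered_sets X C)"
proof (induction X arbitrary: C rule: finite_induct)
  case empty
  show ?case
  proof (cases "C = {}")
    case False
    with empty have "C = {{}}" by auto
    then have "shattered_sets {} C = {{}}"
      unfolding shattered_sets_def using shatters_empty_iff[of C] by auto
    with \<open>C = {{}}\<close> show ?thesis by simp
  qed simp
next
  case (insert x F)
  let ?L = "lower_half x C" and ?H = "upper_half x C"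
  let ?S0 = "shattered_sets F ?L" and ?S1 = "shattered_sets F ?H"
  have "finite C" using insert by (meson finite_Pow_iff finite_insert finite_subset)
  then have "card C = card ?L + card ?H" by (rule card_lower_upper_half)
  also have "\<dots> \<le> card ?S0 + card ?S1"
  proof (intro add_mono insert.IH)
    show "?L \<subseteq> Pow F" "?H \<subseteq> Pow F"
      using insert.prems insert.hyps(2) unfolding lower_half_def upper_half_def by auto
  qed
  also have "\<dots> = card (?S0 \<union> ?S1 \<union> insert x ` (?S0 \<inter> ?S1))"
  proof (rule card_Un_insert_image_Int[symmetric])
    show "finite ?S0" "finite ?S1" using insert.hyps(1) by (simp_all add: finite_shattered_sets)
    show "x \<notin> S" if "S \<in> ?S0 \<union> ?S1" for S
      using that insert.hyps(2) unfolding shattered_sets_def by blast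
  qed
  also have "\<dots> \<le> card (shattered_sets (insert x F) C)"
    using insert.hyps(1)
    by (intro card_mono finite_shattered_sets shattered_sets_insert_supset[OF insert.hyps(2)]) simp
  finally show ?case .
qed

section \<open>Classes attaining the Sauer-Shelah bound\<close>

lemma card_subsets_card_less:
  assumes "finite X" shows "card {S. S \<subseteq> X \<and> card S < k} = (\<Sum>i<k. card X choose i)"
proof -
  have "{S. S \<subseteq> X \<and> card S < k} = (\<Union>i<k. {S. S \<subseteq> X \<and> card S = i})" by auto
  moreover have "card (\<Union>i<k. {S. S \<subseteq> X \<and> card S = i}) = (\<Sum>i<k. card {S. S \<subseteq> X \<and> card S = i})"
    by (rule card_UN_disjoint) (use assms in auto)
  ultimately show ?thesis using n_subsets[OF assms] by simp
qed

lemma sauer_shelah: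
  assumes "finite X" "C \<subseteq> Pow X" "\<And>S. S \<subseteq> X \<Longrightarrow> shatters C S \<Longrightarrow> card S < k"
  shows "card C \<le> (\<Sum>i<k. card X choose i)"
proof -
  have "shattered_sets X C \<subseteq> {S. S \<subseteq> X \<and> card S < k}"
    using assms(3) unfolding shattered_sets_def by auto
  then have "card (shattered_sets X C) \<le> card {S. S \<subseteq> X \<and> card S < k}"
    by (rule card_mono[rotated]) (use assms(1) in auto)
  then show ?thesis
    using card_le_card_shattered_sets[OF assms(1,2)] card_subsets_card_less[OF assms(1), of k] by linarith
qed

text \<open>Unlike \<^const>\<open>maximum_class\<close>, this does not demand that some \<open>k\<close>-set be shattered,
  so it survives restriction to arbitrary subdomains.\<close>
definition sauer_tight :: "'a set \<Rightarrow> 'a set set \<Rightarrow> nat \<Rightarrow> bool" where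
  "sauer_tight X C k \<longleftrightarrow> C \<subseteq> Pow X \<and> (\<forall>S. S \<subseteq> X \<and> shatters C S \<longrightarrow> card S \<le> k)
     \<and> card C = (\<Sum>i\<le>k. card X choose i)"

lemma maximum_class_imp_sauer_tight: "maximum_class X C d \<Longrightarrow> sauer_tight X C d"
  unfolding maximum_class_def sauer_tight_def vc_dim_is_def shattered_sets_def by blast

lemma shattered_sets_sauer_tight:
  assumes "finite X" "sauer_tight X C k"
  shows "shattered_sets X C = {S. S \<subseteq> X \<and> card S \<le> k}"
proof (rule card_seteq)
  show "finite {S. S \<subseteq> X \<and> card S \<le> k}" using assms(1) by simp
  show "shattered_sets X C \<subseteq> {S. S \<subseteq> X \<and> card S \<le> k}"
    using assms(2) unfolding sauer_tight_def shattered_sets_def by blast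
  have "card {S. S \<subseteq> X \<and> card S \<le> k} = (\<Sum>i\<le>k. card X choose i)"
    using card_subsets_card_less[OF assms(1), of "Suc k"] by (simp add: less_Suc_eq_le lessThan_Suc_atMost)
  then show "card {S. S \<subseteq> X \<and> card S \<le> k} \<le> card (shattered_sets X C)"
    using assms(2) card_le_card_shattered_sets[OF assms(1), of C] unfolding sauer_tight_def by simp
qed

lemma finite_sauer_tight: "finite X \<Longrightarrow> sauer_tight X C k \<Longrightarrow> finite C"
  unfolding sauer_tight_def by (meson finite_Pow_iff finite_subset)

lemma restr_shatters_iff: "S \<subseteq> A \<Longrightarrow> shatters (restr C A) S \<longleftrightarrow> shatters C S"
  unfolding shatters_iff restr_def by (auto simp: Int_assoc Int_absorb1)

lemma restr_restr: "restr (restr C A) B = restr C (A \<inter> B)"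
  unfolding restr_def by (auto simp: image_image Int_assoc)

lemma restr_mono: "D \<subseteq> C \<Longrightarrow> restr D A \<subseteq> restr C A"
  unfolding restr_def by blast

lemma restr_Pow: "C \<subseteq> Pow X \<Longrightarrow> restr C X = C"
  unfolding restr_def by (auto simp: image_iff Int_absorb2)

lemma restr_Diff_singleton:
  assumes "C \<subseteq> Pow X" shows "restr C (X - {x}) = lower_half x C \<union> upper_half x C"
proof -
  have "restr C (X - {x}) = (\<lambda>c. c - {x}) ` C"
    unfolding restr_def using assms by (intro image_cong) auto
  also have "\<dots> = (\<lambda>c. c - {x}) ` {c \<in> C. x \<notin> c} \<union> upper_half x C"
    unfolding upper_half_def by blast
  also have "(\<lambda>c. c - {x}) ` {c \<in> C. x \<notin> c} = lower_half x C"
    unfolding lower_half_def by (auto simp: image_iff)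
  finally show ?thesis .
qed

lemma sum_binomial_Suc:
  "(\<Sum>i\<le>k. Suc n choose i) = (\<Sum>i\<le>k. n choose i) + (\<Sum>i<k. n choose i)"
  by (induction k) auto

lemma shatters_insert_of_reduction:
  assumes "shatters (lower_half x C \<inter> upper_half x C) S" "x \<notin> S"
  shows "shatters C (insert x S)"
  using shatters_mono[OF Int_lower1 assms(1)] shatters_mono[OF Int_lower2 assms(1)] assms(2)
  by (rule shatters_insert_of_halves)

lemma sauer_tight_halves:
  assumes fX: "finite X" and x: "x \<in> X" and tight: "sauer_tight X C k"
  shows "sauer_tight (X - {x}) (lower_half x C \<union> upper_half x C) k"
    and "1 \<le> k \<Longrightarrow> sauer_tight (X - {x}) (lower_half x C \<inter> upper_half x C) (k - 1)"
proof -
  let ?L = "lower_half x C" and ?H = "upper_half x C" and ?X = "X - {x}"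
  have CP: "C \<subseteq> Pow X" and shC: "\<And>S. S \<subseteq> X \<Longrightarrow> shatters C S \<Longrightarrow> card S \<le> k"
    and cC: "card C = (\<Sum>i\<le>k. card X choose i)" using tight unfolding sauer_tight_def by auto
  have sub: "?L \<union> ?H \<subseteq> Pow ?X" "?L \<inter> ?H \<subseteq> Pow ?X"
    using CP unfolding lower_half_def upper_half_def by auto
  have fin: "finite ?X" "finite ?L" "finite ?H"
    using fX sub(1) by (auto intro: finite_subset[of _ "Pow ?X"])
  have sh_union: "card S < Suc k" if "S \<subseteq> ?X" "shatters (?L \<union> ?H) S" for S
  proof -
    have "shatters C S"
      using that(2) restr_shatters_iff[OF that(1), of C] restr_Diff_singleton[OF CP] by simp
    moreover have "S \<subseteq> X" using that(1) by blast
    ultimately show ?thesis using shC by (simp add: less_Suc_eq_le)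
  qed
  have sh_red: "card S < k" if "S \<subseteq> ?X" "shatters (?L \<inter> ?H) S" for S
  proof -
    have "card (insert x S) \<le> k"
      using shC[of "insert x S"] shatters_insert_of_reduction[OF that(2)] that(1) x by auto
    moreover have "finite S" "x \<notin> S" using that(1) fin(1) finite_subset by auto
    ultimately show ?thesis by simp
  qed
  have le_union: "card (?L \<union> ?H) \<le> (\<Sum>i\<le>k. card ?X choose i)"
    using sauer_shelah[OF fin(1) sub(1) sh_union] by (simp only: lessThan_Suc_atMost)
  have le_red: "card (?L \<inter> ?H) \<le> (\<Sum>i<k. card ?X choose i)"
    using sauer_shelah[OF fin(1) sub(2) sh_red] .
  have "card (?L \<union> ?H) + card (?L \<inter> ?H) = card C"
    using card_lower_upper_half[OF finite_sauer_tight[OF fX tight]] card_Un_Int[OF fin(2,3)] by simp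
  also have "\<dots> = (\<Sum>i\<le>k. card ?X choose i) + (\<Sum>i<k. card ?X choose i)"
    using cC card_Suc_Diff1[OF fX x] sum_binomial_Suc[where n = "card ?X" and k = k] by simp
  finally have card_union: "card (?L \<union> ?H) = (\<Sum>i\<le>k. card ?X choose i)"
    and card_red: "card (?L \<inter> ?H) = (\<Sum>i<k. card ?X choose i)"
    using le_union le_red by linarith+
  show "sauer_tight ?X (?L \<union> ?H) k"
    unfolding sauer_tight_def using sub(1) sh_union card_union by (simp add: less_Suc_eq_le)
  assume "1 \<le> k"
  then have "{..<k} = {..k - 1}" "\<And>n. n < k \<longleftrightarrow> n \<le> k - 1" by auto
  then show "sauer_tight ?X (?L \<inter> ?H) (k - 1)"
    unfolding sauer_tight_def using sub(2) sh_red card_red by simp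
qed

lemma sauer_tight_restr:
  assumes fX: "finite X" and M: "sauer_tight X C k" and "Z \<subseteq> X"
  shows "sauer_tight Z (restr C Z) k"
proof -
  have "sauer_tight (X - W) (restr C (X - W)) k" if "W \<subseteq> X" for W
    using finite_subset[OF that fX] that
  proof (induction W rule: finite_induct)
    case empty
    then show ?case using M restr_Pow[of C X] unfolding sauer_tight_def by auto
  next
    case (insert w W)
    let ?C = "restr C (X - W)"
    have IH: "sauer_tight (X - W) ?C k" and w: "w \<in> X - W" using insert by auto
    have eq: "X - insert w W = X - W - {w}" by auto
    have "(X - W) \<inter> (X - W - {w}) = X - W - {w}" by auto
    then have "restr C (X - insert w W) = restr ?C (X - W - {w})" by (simp add: restr_restr eq)
    also have "\<dots> = lower_half w ?C \<union> upper_half w ?C"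
      using IH unfolding sauer_tight_def by (intro restr_Diff_singleton) simp
    finally show ?case
      using sauer_tight_halves(1)[OF _ w IH] fX by (simp add: eq)
  qed
  from this[of "X - Z"] show ?thesis using assms(3) by (simp add: Diff_Diff_Int Int_absorb1)
qed

section \<open>Cubes\<close>

lemma mem_cube_iff: "c \<in> cube T Y \<longleftrightarrow> (\<exists>Z\<subseteq>Y. c = T \<union> Z)"
  unfolding cube_def by auto

lemma cube_split:
  assumes "T \<inter> Y = {}" "c \<in> cube T Y" shows "c = T \<union> (c \<inter> Y)" "T = c - Y"
  using assms unfolding mem_cube_iff by auto

lemma cube_restr:
  assumes "cube T W \<subseteq> C" "W \<subseteq> Z" shows "cube (T \<inter> Z) W \<subseteq> restr C Z"
proof
  fix v assume "v \<in> cube (T \<inter> Z) W"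
  then obtain V where V: "V \<subseteq> W" "v = (T \<inter> Z) \<union> V" unfolding mem_cube_iff by blast
  then have "T \<union> V \<in> cube T W" unfolding mem_cube_iff by blast
  then have "T \<union> V \<in> C" using assms(1) by blast
  moreover have "v = (T \<union> V) \<inter> Z" using V assms(2) by auto
  ultimately show "v \<in> restr C Z" unfolding restr_def by blast
qed

lemma ex_cube_sauer_tight:
  "finite X \<Longrightarrow> sauer_tight X C k \<Longrightarrow> Y \<subseteq> X \<Longrightarrow> card Y = k \<Longrightarrow> \<exists>T\<subseteq>X - Y. cube T Y \<subseteq> C"
proof (induction k arbitrary: X C Y)
  case 0
  then have "Y = {}" using finite_subset by fastforce
  have "card C = 1" using "0.prems"(2) unfolding sauer_tight_def by simp
  then obtain T where T: "C = {T}" by (rule card_1_singletonE)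
  then have "T \<subseteq> X" using "0.prems"(2) unfolding sauer_tight_def by auto
  moreover have "cube T {} = {T}" unfolding cube_def by auto
  ultimately show ?case using T \<open>Y = {}\<close> by auto
next
  case (Suc k)
  obtain y where y: "y \<in> Y" using Suc.prems(4) by (metis card_eq_SucD insertI1)
  let ?R = "lower_half y C \<inter> upper_half y C"
  have "sauer_tight (X - {y}) ?R k"
    using sauer_tight_halves(2)[OF Suc.prems(1) _ Suc.prems(2)] y Suc.prems(3) by auto
  moreover have "card (Y - {y}) = k" using Suc.prems(4) y by simp
  ultimately obtain T where T: "T \<subseteq> X - {y} - (Y - {y})" and cube_T: "cube T (Y - {y}) \<subseteq> ?R"
    using Suc.IH[of "X - {y}" ?R "Y - {y}"] Suc.prems(1,3) by blast
  have "cube T Y \<subseteq> C"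
  proof
    fix v assume "v \<in> cube T Y"
    then obtain Z where Z: "Z \<subseteq> Y" "v = T \<union> Z" unfolding mem_cube_iff by auto
    then have "T \<union> (Z - {y}) \<in> cube T (Y - {y})" unfolding mem_cube_iff by blast
    then have "T \<union> (Z - {y}) \<in> ?R" using cube_T by blast
    then have "T \<union> (Z - {y}) \<in> C" "insert y (T \<union> (Z - {y})) \<in> C"
      unfolding mem_reduction_iff by auto
    moreover have "v = T \<union> (Z - {y}) \<or> v = insert y (T \<union> (Z - {y}))" using Z by auto
    ultimately show "v \<in> C" by auto
  qed
  moreover have "T \<subseteq> X - Y" using T by auto
  ultimately show ?case by blast
qed

section \<open>Every choice of sources is a bijection\<close>

lemma left_inverse_imp_right_inverse_sum:
  fixes A :: "'i \<Rightarrow> 'j \<Rightarrow> 'b::field" and B :: "'j \<Rightarrow> 'i \<Rightarrow> 'b"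
  assumes fI: "finite I" and fJ: "finite J" and cIJ: "card I = card J"
    and AB: "\<And>i i'. i \<in> I \<Longrightarrow> i' \<in> I \<Longrightarrow> (\<Sum>j\<in>J. A i j * B j i') = (if i = i' then 1 else 0)"
    and j: "j \<in> J" and j': "j' \<in> J"
  shows "(\<Sum>i\<in>I. B j i * A i j') = (if j = j' then 1 else 0)"
proof -
  define n where "n = card I"
  obtain f where f: "bij_betw f {0..<n} I" using ex_bij_betw_nat_finite[OF fI] n_def by auto
  obtain g where g: "bij_betw g {0..<n} J" using ex_bij_betw_nat_finite[OF fJ] n_def cIJ by auto
  define MA where "MA = mat n n (\<lambda>(a,b). A (f a) (g b))"
  define MB where "MB = mat n n (\<lambda>(a,b). B (g a) (f b))"
  have MAc: "MA \<in> carrier_mat n n" and MBc: "MB \<in> carrier_mat n n" unfolding MA_def MB_def by auto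
  have "MA * MB = 1\<^sub>m n"
  proof (rule eq_matI)
    fix a b assume a: "a < dim_row (1\<^sub>m n :: 'b mat)" and b: "b < dim_col (1\<^sub>m n :: 'b mat)"
    then have a: "a < n" and b: "b < n" by auto
    have "(MA * MB) $$ (a, b) = (\<Sum>k\<in>{0..<n}. A (f a) (g k) * B (g k) (f b))"
      using a b unfolding MA_def MB_def by (auto simp: scalar_prod_def intro!: sum.cong)
    also have "\<dots> = (\<Sum>jj\<in>J. A (f a) jj * B jj (f b))"
      using sum.reindex_bij_betw[OF g, of "\<lambda>jj. A (f a) jj * B jj (f b)"] by simp
    also have "\<dots> = (if f a = f b then 1 else 0)"
      using AB a b f by (auto simp: bij_betw_def)
    also have "\<dots> = (if a = b then 1 else 0)"
      using f a b by (auto simp: bij_betw_def inj_on_def)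
    finally show "(MA * MB) $$ (a, b) = 1\<^sub>m n $$ (a, b)" using a b by simp
  qed (auto simp: MA_def MB_def)
  then have BA: "MB * MA = 1\<^sub>m n" using mat_mult_left_right_inverse[OF MAc MBc] by simp
  obtain a where a: "a < n" "g a = j" using j g by (auto simp: bij_betw_def)
  obtain b where b: "b < n" "g b = j'" using j' g by (auto simp: bij_betw_def)
  have "(\<Sum>i\<in>I. B j i * A i j') = (\<Sum>k\<in>{0..<n}. B (g a) (f k) * A (f k) (g b))"
    using sum.reindex_bij_betw[OF f, of "\<lambda>i. B j i * A i j'"] a b by simp
  also have "\<dots> = (MB * MA) $$ (a, b)"
    using a b unfolding MA_def MB_def by (auto simp: scalar_prod_def intro!: sum.cong)
  also have "\<dots> = (if a = b then 1 else 0)" using BA a b by simp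
  also have "\<dots> = (if j = j' then 1 else 0)" using g a b by (auto simp: bij_betw_def inj_on_def)
  finally show ?thesis .
qed

lemma sum_cube:
  assumes "T \<inter> Y = {}" shows "sum f (cube T Y) = (\<Sum>Z\<in>Pow Y. f (T \<union> Z))"
proof -
  have "cube T Y = (\<lambda>Z. T \<union> Z) ` Pow Y" unfolding cube_def by auto
  moreover have "inj_on (\<lambda>Z. T \<union> Z) (Pow Y)"
    by (rule inj_on_inverseI[where g = "\<lambda>c. c \<inter> Y"]) (use assms in auto)
  ultimately show ?thesis by (simp add: sum.reindex)
qed

lemma alternating_sum_Pow_eq_0:
  fixes g :: "'a set \<Rightarrow> 'b::comm_ring_1"
  assumes "finite Y" "y \<in> Y" "\<And>Z. Z \<subseteq> Y - {y} \<Longrightarrow> g (insert y Z) = g Z"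
  shows "(\<Sum>Z\<in>Pow Y. (-1)^card (Y - Z) * g Z) = 0"
proof -
  let ?Y = "Y - {y}" and ?f = "\<lambda>Z. (-1)^card (Y - Z) * g Z"
  have "Pow Y = Pow ?Y \<union> insert y ` Pow ?Y" using Pow_insert[of y ?Y] assms(2) by (simp add: insert_absorb)
  moreover have "Pow ?Y \<inter> insert y ` Pow ?Y = {}" by auto
  moreover have "inj_on (insert y) (Pow ?Y)" by (rule inj_on_inverseI[where g = "\<lambda>c. c - {y}"]) auto
  ultimately have "(\<Sum>Z\<in>Pow Y. ?f Z) = (\<Sum>Z\<in>Pow ?Y. ?f Z) + (\<Sum>Z\<in>Pow ?Y. ?f (insert y Z))"
    using assms(1) by (simp add: sum.union_disjoint sum.reindex)
  also have "\<dots> = (\<Sum>Z\<in>Pow ?Y. ?f Z + ?f (insert y Z))"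
    by (rule sum.distrib[symmetric])
  also have "\<dots> = 0"
  proof (rule sum.neutral, intro ballI)
    fix Z assume Z: "Z \<in> Pow ?Y"
    then have "Y - Z = insert y (?Y - Z)" "Y - insert y Z = ?Y - Z" using assms(2) by auto
    moreover have "finite (?Y - Z)" using assms(1) by simp
    ultimately show "?f Z + ?f (insert y Z) = 0" using assms(3) Z by simp
  qed
  finally show ?thesis .
qed

lemma sum_cube_sign_pattern:
  assumes "finite Y" "finite Y'" "card Y = card Y'" "T \<inter> Y = {}" "P \<subseteq> Y'"
  shows "(\<Sum>c\<in>cube T Y. (-1::real)^card (Y - c) * (if c \<inter> Y' = P then (-1)^card (Y' - P) else 0))
    = (if Y = Y' then 1 else 0)"
    (is "?S = _")
proof -
  let ?g = "\<lambda>c. if c \<inter> Y' = P then (-1::real)^card (Y' - P) else 0"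
  have "?S = (\<Sum>Z\<in>Pow Y. (-1)^card (Y - (T \<union> Z)) * ?g (T \<union> Z))"
    by (rule sum_cube[OF assms(4)])
  also have "\<dots> = (\<Sum>Z\<in>Pow Y. (-1)^card (Y - Z) * ?g (T \<union> Z))"
  proof (rule sum.cong[OF refl])
    fix Z assume "Z \<in> Pow Y"
    have "Y - (T \<union> Z) = Y - Z" using assms(4) by auto
    then show "(-1)^card (Y - (T \<union> Z)) * ?g (T \<union> Z) = (-1)^card (Y - Z) * ?g (T \<union> Z)" by simp
  qed
  also have "\<dots> = (if Y = Y' then 1 else 0)"
  proof (cases "Y = Y'")
    case True
    have "(\<Sum>Z\<in>Pow Y. (-1)^card (Y - Z) * ?g (T \<union> Z)) = (\<Sum>Z\<in>Pow Y. if Z = P then 1 else 0)"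
    proof (rule sum.cong[OF refl])
      fix Z assume "Z \<in> Pow Y"
      then have "(T \<union> Z) \<inter> Y' = Z" using assms(4) True by auto
      then show "(-1::real)^card (Y - Z) * ?g (T \<union> Z) = (if Z = P then 1 else 0)"
        using True by (simp add: power_mult_distrib[symmetric])
    qed
    then show ?thesis using True assms(1,5) by simp
  next
    case False
    then have "\<not> Y \<subseteq> Y'" using card_subset_eq[OF assms(2) _ assms(3)] by blast
    then obtain y where y: "y \<in> Y" "y \<notin> Y'" by blast
    have "(\<Sum>Z\<in>Pow Y. (-1)^card (Y - Z) * ?g (T \<union> Z)) = 0"
    proof (rule alternating_sum_Pow_eq_0[OF assms(1) y(1)])
      fix Z
      have "(T \<union> insert y Z) \<inter> Y' = (T \<union> Z) \<inter> Y'" using y(2) by auto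
      then show "?g (T \<union> insert y Z) = ?g (T \<union> Z)" by simp
    qed
    then show ?thesis using False by simp
  qed
  finally show ?thesis .
qed

lemma bij_betw_cube_sources:
  fixes s T :: "'a set \<Rightarrow> 'a set" and C D Ds :: "'a set set"
  assumes fC: "finite C" and DC: "D \<subseteq> C" and fDs: "finite Ds"
    and card_eq: "card (C - D) = card Ds"
    and fY: "\<And>Y. Y \<in> Ds \<Longrightarrow> finite Y"
    and same_card: "\<And>Y Y'. Y \<in> Ds \<Longrightarrow> Y' \<in> Ds \<Longrightarrow> card Y = card Y'"
    and disj: "\<And>Y. Y \<in> Ds \<Longrightarrow> T Y \<inter> Y = {}"
    and cube_C: "\<And>Y. Y \<in> Ds \<Longrightarrow> cube (T Y) Y \<subseteq> C"
    and src: "\<And>Y. Y \<in> Ds \<Longrightarrow> s Y \<in> cube (T Y) Y"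
    and not_D: "\<And>Y. Y \<in> Ds \<Longrightarrow> s Y \<inter> Y \<notin> restr D Y"
  shows "bij_betw s Ds (C - D)"
proof -
  txt \<open>\<open>A B = I\<close> by \<open>sum_cube_sign_pattern\<close>; as both matrices are square, also
    \<open>B A = I\<close>, and a nonzero diagonal term \<open>B c Y * A Y c\<close> forces \<open>c = s Y\<close>.\<close>
  define A where "A Y c = (if c \<in> cube (T Y) Y then (-1::real)^card (Y - c) else 0)" for Y c
  define B where "B c Y = (if c \<inter> Y = s Y \<inter> Y then (-1::real)^card (Y - s Y \<inter> Y) else 0)" for c Y
  have B_D: "B c Y = 0" if "c \<in> D" "Y \<in> Ds" for c Y
    using not_D[OF that(2)] that(1) unfolding B_def restr_def by auto
  have orth: "(\<Sum>c\<in>C - D. A Y c * B c Y') = (if Y = Y' then 1 else 0)"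
    if Y: "Y \<in> Ds" and Y': "Y' \<in> Ds" for Y Y'
  proof -
    have "(\<Sum>c\<in>C - D. A Y c * B c Y') = (\<Sum>c\<in>C. A Y c * B c Y')"
      using B_D[OF _ Y'] DC by (intro sum.mono_neutral_left fC) auto
    also have "\<dots> = (\<Sum>c\<in>cube (T Y) Y. A Y c * B c Y')"
      using cube_C[OF Y] unfolding A_def by (intro sum.mono_neutral_right fC) auto
    also have "\<dots> = (\<Sum>c\<in>cube (T Y) Y. (-1)^card (Y - c) * B c Y')"
      unfolding A_def by (rule sum.cong) auto
    also have "\<dots> = (if Y = Y' then 1 else 0)"
      unfolding B_def using sum_cube_sign_pattern[OF fY[OF Y] fY[OF Y'] same_card[OF Y Y'] disj[OF Y]]
      by simp
    finally show ?thesis .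
  qed
  have diag: "(\<Sum>Y\<in>Ds. B c Y * A Y c) = 1" if "c \<in> C - D" for c
    using left_inverse_imp_right_inverse_sum[OF fDs _ card_eq[symmetric] orth that that] fC by simp
  have "C - D \<subseteq> s ` Ds"
  proof
    fix c assume c: "c \<in> C - D"
    obtain Y where Y: "Y \<in> Ds" and "B c Y * A Y c \<noteq> 0"
      using diag[OF c] sum.neutral[of Ds "\<lambda>Y. B c Y * A Y c"] by force
    then have "c \<in> cube (T Y) Y" "c \<inter> Y = s Y \<inter> Y" unfolding A_def B_def by (auto split: if_splits)
    moreover have "s Y = T Y \<union> (s Y \<inter> Y)" using cube_split(1)[OF disj[OF Y] src[OF Y]] .
    ultimately have "c = s Y" using cube_split(1)[OF disj[OF Y]] by metis
    then show "c \<in> s ` Ds" using Y by blast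
  qed
  moreover have "s Y \<in> C - D" if "Y \<in> Ds" for Y
    using src[OF that] cube_C[OF that] not_D[OF that] unfolding restr_def by blast
  ultimately have "s ` Ds = C - D" by blast
  then show ?thesis using card_eq fDs by (simp add: bij_betw_def eq_card_imp_inj_on)
qed

section \<open>Incomplete cubes of a pair of maximum classes\<close>

lemma is_source_imp_base_eq:
  assumes "is_source X C D T Y c" shows "T = c - Y"
proof -
  have "T \<inter> Y = {}" "c \<in> cube T Y"
    using assms unfolding is_source_def incomplete_cube_def is_cube_def by auto
  then show ?thesis by (rule cube_split(2))
qed

lemma is_source_restr:
  assumes src: "is_source X C D T Y c" and YZ: "Y \<subseteq> Z" and "Z \<subseteq> X"
  shows "is_source Z (restr C Z) (restr D Z) (T \<inter> Z) Y (c \<inter> Z)"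
proof -
  have T: "T \<subseteq> X - Y" and cube_C: "cube T Y \<subseteq> C" and c: "c \<in> cube T Y"
    and Y: "Y \<in> shattered_sets X C - shattered_sets X D" and pat: "c \<inter> Y \<notin> restr D Y"
    using src unfolding is_source_def incomplete_cube_def is_cube_def by auto
  have "is_cube Z (T \<inter> Z) Y" using T YZ unfolding is_cube_def by auto
  moreover have "cube (T \<inter> Z) Y \<subseteq> restr C Z" using cube_restr[OF cube_C YZ] .
  moreover have "Y \<in> shattered_sets Z (restr C Z) - shattered_sets Z (restr D Z)"
    using Y YZ restr_shatters_iff[OF YZ, of C] restr_shatters_iff[OF YZ, of D]
    unfolding shattered_sets_def by simp
  moreover have "c \<inter> Z \<in> cube (T \<inter> Z) Y"
  proof -
    obtain W where "W \<subseteq> Y" "c = T \<union> W" using c unfolding mem_cube_iff by blast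
    moreover from this have "c \<inter> Z = (T \<inter> Z) \<union> W" using YZ by auto
    ultimately show ?thesis unfolding mem_cube_iff by blast
  qed
  moreover have "(c \<inter> Z) \<inter> Y \<notin> restr (restr D Z) Y"
  proof -
    have "restr (restr D Z) Y = restr D Y" using YZ by (simp add: restr_restr Int_absorb1)
    moreover have "(c \<inter> Z) \<inter> Y = c \<inter> Y" using YZ by auto
    ultimately show ?thesis using pat by simp
  qed
  ultimately show ?thesis unfolding is_source_def incomplete_cube_def by blast
qed

definition source_support :: "'a set \<Rightarrow> 'a set set \<Rightarrow> 'a set set \<Rightarrow> 'a set \<Rightarrow> 'a set" where
  "source_support X C D c = (THE Y. \<exists>T. is_source X C D T Y c)"

locale sauer_tight_pair =
  fixes X :: "'a set" and C D :: "'a set set" and d :: nat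
  assumes finite_X: "finite X" and d_pos: "1 \<le> d"
    and tight_C: "sauer_tight X C d" and tight_D: "sauer_tight X D (d - 1)"
    and D_subset_C: "D \<subseteq> C"
begin

lemma restr_pair:
  assumes "Z \<subseteq> X" shows "sauer_tight_pair Z (restr C Z) (restr D Z) d"
proof
  show "finite Z" using finite_subset[OF assms finite_X] .
  show "1 \<le> d" by (rule d_pos)
  show "sauer_tight Z (restr C Z) d" using sauer_tight_restr[OF finite_X tight_C assms] .
  show "sauer_tight Z (restr D Z) (d - 1)" using sauer_tight_restr[OF finite_X tight_D assms] .
  show "restr D Z \<subseteq> restr C Z" using restr_mono[OF D_subset_C] .
qed

lemma shattered_sets_Diff: "shattered_sets X C - shattered_sets X D = {Y. Y \<subseteq> X \<and> card Y = d}"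
  using shattered_sets_sauer_tight[OF finite_X tight_C] shattered_sets_sauer_tight[OF finite_X tight_D] d_pos
  by auto

lemma is_source_iff:
  "is_source X C D T Y c \<longleftrightarrow>
     Y \<subseteq> X \<and> card Y = d \<and> T \<subseteq> X - Y \<and> cube T Y \<subseteq> C \<and> c \<in> cube T Y \<and> c \<inter> Y \<notin> restr D Y"
  unfolding is_source_def incomplete_cube_def is_cube_def shattered_sets_Diff by auto

lemma ex_source: assumes "Y \<subseteq> X" "card Y = d" shows "\<exists>c T. is_source X C D T Y c"
proof -
  obtain T where T: "T \<subseteq> X - Y" "cube T Y \<subseteq> C"
    using ex_cube_sauer_tight[OF finite_X tight_C assms] by blast
  have "Y \<notin> shattered_sets X D" using shattered_sets_Diff assms by blast
  then obtain P where P: "P \<subseteq> Y" "P \<notin> restr D Y"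
    using assms(1) unfolding shattered_sets_def shatters_def restr_def by auto
  have "T \<union> P \<in> cube T Y" "(T \<union> P) \<inter> Y = P" using T(1) P(1) unfolding mem_cube_iff by auto
  then have "is_source X C D T Y (T \<union> P)" using T assms P unfolding is_source_iff by simp
  then show ?thesis by blast
qed

lemma card_Diff_eq_card_subsets: "card (C - D) = card {Y. Y \<subseteq> X \<and> card Y = d}"
proof -
  obtain d' where d': "d = Suc d'" using d_pos by (cases d) auto
  have "finite D" using finite_sauer_tight[OF finite_X tight_D] .
  then have "card (C - D) = card C - card D" using D_subset_C by (rule card_Diff_subset)
  also have "\<dots> = card X choose d" using tight_C tight_D unfolding sauer_tight_def d' by simp
  also have "\<dots> = card {Y. Y \<subseteq> X \<and> card Y = d}" using n_subsets[OF finite_X] by simp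
  finally show ?thesis .
qed

lemma bij_betw_source_choice:
  assumes src: "\<And>Y. Y \<subseteq> X \<Longrightarrow> card Y = d \<Longrightarrow> \<exists>T. is_source X C D T Y (s Y)"
  shows "bij_betw s {Y. Y \<subseteq> X \<and> card Y = d} (C - D)"
proof (rule bij_betw_cube_sources[where T = "\<lambda>Y. s Y - Y"])
  show "finite C" using finite_sauer_tight[OF finite_X tight_C] .
  show "D \<subseteq> C" by (rule D_subset_C)
  show "finite {Y. Y \<subseteq> X \<and> card Y = d}" using finite_X by simp
  show "card (C - D) = card {Y. Y \<subseteq> X \<and> card Y = d}" by (rule card_Diff_eq_card_subsets)
  fix Y assume "Y \<in> {Y. Y \<subseteq> X \<and> card Y = d}"
  then obtain T where Y: "Y \<subseteq> X" and src_Y: "is_source X C D T Y (s Y)" using src by blast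
  then have "T \<subseteq> X - Y" "cube T Y \<subseteq> C" "s Y \<in> cube T Y" "s Y \<inter> Y \<notin> restr D Y"
    unfolding is_source_iff by auto
  moreover have "T = s Y - Y" using is_source_imp_base_eq[OF src_Y] .
  ultimately show "finite Y" "(s Y - Y) \<inter> Y = {}" "cube (s Y - Y) Y \<subseteq> C" "s Y \<in> cube (s Y - Y) Y"
    "s Y \<inter> Y \<notin> restr D Y"
    using Y finite_X finite_subset by auto
next
  fix Y Y' assume "Y \<in> {Y. Y \<subseteq> X \<and> card Y = d}" "Y' \<in> {Y. Y \<subseteq> X \<and> card Y = d}"
  then show "card Y = card Y'" by simp
qed

definition source_choice :: "'a set \<Rightarrow> 'a set" where
  "source_choice Y = (SOME c. \<exists>T. is_source X C D T Y c)"

lemma source_choice_is_source: "Y \<subseteq> X \<Longrightarrow> card Y = d \<Longrightarrow> \<exists>T. is_source X C D T Y (source_choice Y)"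
  unfolding source_choice_def by (rule someI_ex[OF ex_source])

lemma source_support_unique:
  assumes "is_source X C D T1 Y1 c" "is_source X C D T2 Y2 c" shows "Y1 = Y2"
proof -
  txt \<open>Every choice of sources is injective, including one that picks \<open>c\<close> at both supports.\<close>
  let ?s = "source_choice(Y1 := c, Y2 := c)"
  have "bij_betw ?s {Y. Y \<subseteq> X \<and> card Y = d} (C - D)"
    using source_choice_is_source assms by (intro bij_betw_source_choice) auto
  moreover have "Y1 \<in> {Y. Y \<subseteq> X \<and> card Y = d}" "Y2 \<in> {Y. Y \<subseteq> X \<and> card Y = d}"
    using assms unfolding is_source_iff by auto
  moreover have "?s Y1 = ?s Y2" by simp
  ultimately show ?thesis unfolding bij_betw_def by (blast dest: inj_onD)
qed

lemma ex_source_of_mem: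
  assumes "c \<in> C - D" obtains T Y where "is_source X C D T Y c"
proof -
  have "c \<in> source_choice ` {Y. Y \<subseteq> X \<and> card Y = d}"
    using bij_betw_source_choice[OF source_choice_is_source] assms unfolding bij_betw_def by blast
  then show ?thesis using source_choice_is_source that by blast
qed

lemma ex1_source:
  assumes "c \<in> C - D" shows "\<exists>!(T, Y). is_source X C D T Y c"
proof -
  obtain T Y where src: "is_source X C D T Y c" using ex_source_of_mem[OF assms] .
  have uniq: "(T', Y') = (T, Y)" if src': "is_source X C D T' Y' c" for T' Y'
    using source_support_unique[OF src' src] is_source_imp_base_eq[OF src']
      is_source_imp_base_eq[OF src] by simp
  show ?thesis
  proof (rule ex1I[of _ "(T, Y)"])
    show "case (T, Y) of (T, Y) \<Rightarrow> is_source X C D T Y c" using src by simp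
    fix p assume "case p of (T, Y) \<Rightarrow> is_source X C D T Y c"
    then show "p = (T, Y)" using uniq by (cases p) simp
  qed
qed

lemma source_support_eq:
  assumes "is_source X C D T Y c" shows "source_support X C D c = Y"
  unfolding source_support_def
proof (rule the_equality)
  show "\<exists>T. is_source X C D T Y c" using assms by blast
  fix Y' assume "\<exists>T. is_source X C D T Y' c"
  then obtain T' where "is_source X C D T' Y' c" by blast
  then show "Y' = Y" using assms by (rule source_support_unique)
qed

lemma is_source_source_support:
  assumes "c \<in> C - D" obtains T where "is_source X C D T (source_support X C D c) c"
proof -
  obtain T Y where src: "is_source X C D T Y c" using ex_source_of_mem[OF assms] .
  then show ?thesis using that source_support_eq[OF src] by simp
qed

lemma bij_betw_source_support:
  "bij_betw (source_support X C D) (C - D) {Y. Y \<subseteq> X \<and> card Y = d}"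
proof -
  let ?Ds = "{Y. Y \<subseteq> X \<and> card Y = d}"
  have img: "source_choice ` ?Ds = C - D"
    using bij_betw_source_choice[OF source_choice_is_source] unfolding bij_betw_def by simp
  have support_choice: "source_support X C D (source_choice Y) = Y" if "Y \<in> ?Ds" for Y
    using source_choice_is_source that source_support_eq by blast
  show ?thesis
  proof (rule bij_betw_byWitness[where f' = source_choice])
    show "\<forall>c\<in>C - D. source_choice (source_support X C D c) = c"
      unfolding img[symmetric] using support_choice by auto
    show "source_support X C D ` (C - D) \<subseteq> ?Ds"
      unfolding img[symmetric] using support_choice by auto
    show "\<forall>Y\<in>?Ds. source_support X C D (source_choice Y) = Y" using support_choice by blast
    show "source_choice ` ?Ds \<subseteq> C - D" using img by simp
  qed
qed

lemma sources_separated: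
  assumes a: "a \<in> C - D" and b: "b \<in> C - D" and "a \<noteq> b"
  defines "Z \<equiv> source_support X C D a \<union> source_support X C D b"
  shows "a \<inter> Z \<noteq> b \<inter> Z"
proof
  assume eq: "a \<inter> Z = b \<inter> Z"
  obtain Ta where src_a: "is_source X C D Ta (source_support X C D a) a"
    using is_source_source_support[OF a] .
  obtain Tb where src_b: "is_source X C D Tb (source_support X C D b) b"
    using is_source_source_support[OF b] .
  have supports_ne: "source_support X C D a \<noteq> source_support X C D b"
    using bij_betw_source_support a b \<open>a \<noteq> b\<close> unfolding bij_betw_def by (blast dest: inj_onD)
  have Z: "Z \<subseteq> X" using src_a src_b unfolding Z_def is_source_iff by auto
  then interpret Z: sauer_tight_pair Z "restr C Z" "restr D Z" d by (rule restr_pair)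
  have "is_source Z (restr C Z) (restr D Z) (Ta \<inter> Z) (source_support X C D a) (a \<inter> Z)"
    using is_source_restr[OF src_a _ Z] unfolding Z_def by blast
  moreover have "is_source Z (restr C Z) (restr D Z) (Tb \<inter> Z) (source_support X C D b) (a \<inter> Z)"
    using is_source_restr[OF src_b _ Z] eq unfolding Z_def by auto
  ultimately have "source_support X C D a = source_support X C D b" by (rule Z.source_support_unique)
  with supports_ne show False by contradiction
qed

lemma source_separated_from_D:
  assumes a: "a \<in> C - D" and b: "b \<in> D"
  shows "a \<inter> (source_support X C D a \<union> R) \<noteq> b \<inter> (source_support X C D a \<union> R)"
proof
  let ?Y = "source_support X C D a"
  assume "a \<inter> (?Y \<union> R) = b \<inter> (?Y \<union> R)"
  then have "a \<inter> ?Y = b \<inter> ?Y" by blast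
  moreover obtain T where "is_source X C D T ?Y a" using is_source_source_support[OF a] .
  ultimately have "b \<inter> ?Y \<notin> restr D ?Y" unfolding is_source_iff by simp
  then show False using b unfolding restr_def by blast
qed

lemma representation_map_extend:
  assumes r': "representation_map X D r'"
  shows "representation_map X C (\<lambda>c. if c \<in> D then r' c else source_support X C D c)"
    (is "representation_map X C ?r")
proof -
  let ?Ds = "{Y. Y \<subseteq> X \<and> card Y = d}"
  have bij_D: "bij_betw ?r D (shattered_sets X D)"
    using r' unfolding representation_map_def by (simp cong: bij_betw_cong)
  have "bij_betw ?r (C - D) ?Ds \<longleftrightarrow> bij_betw (source_support X C D) (C - D) ?Ds"
    by (rule bij_betw_cong) simp
  then have bij_CD: "bij_betw ?r (C - D) ?Ds" using bij_betw_source_support by simp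
  have "shattered_sets X D \<inter> ?Ds = {}"
    using shattered_sets_sauer_tight[OF finite_X tight_D] d_pos by auto
  with bij_D bij_CD have "bij_betw ?r (D \<union> (C - D)) (shattered_sets X D \<union> ?Ds)"
    by (rule bij_betw_combine)
  moreover have "D \<union> (C - D) = C" using D_subset_C by blast
  moreover have "shattered_sets X D \<union> ?Ds = shattered_sets X C"
    using shattered_sets_sauer_tight[OF finite_X tight_C]
      shattered_sets_sauer_tight[OF finite_X tight_D] by auto
  ultimately have bij: "bij_betw ?r C (shattered_sets X C)" by simp
  have sep: "c \<inter> (?r c \<union> ?r c') \<noteq> c' \<inter> (?r c \<union> ?r c')"
    if "c \<in> C" "c' \<in> C" "c \<noteq> c'" for c c'
  proof (cases "c \<in> D"; cases "c' \<in> D")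
    assume "c \<in> D" "c' \<in> D"
    then show ?thesis using r' \<open>c \<noteq> c'\<close> unfolding representation_map_def by simp
  next
    assume "c \<in> D" "c' \<notin> D"
    then have "c' \<inter> (?r c' \<union> ?r c) \<noteq> c \<inter> (?r c' \<union> ?r c)"
      using source_separated_from_D[of c' c "r' c"] that by simp
    then show ?thesis by (metis sup_commute)
  next
    assume "c \<notin> D" "c' \<in> D"
    then show ?thesis using source_separated_from_D[of c c' "r' c'"] that by simp
  next
    assume "c \<notin> D" "c' \<notin> D"
    then show ?thesis using sources_separated[of c c'] that by simp
  qed
  show ?thesis unfolding representation_map_def using bij sep by blast
qed

end

theorem proposition5p2:
  fixes X :: "'a set" and C D :: "'a set set" and d :: nat
  assumes "finite X"
    and "1 \<le> d"
    and "maximum_class X C d"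
    and "maximum_class X D (d - 1)"
    and "D \<subseteq> C"
  shows "(\<forall>c\<in>C - D. \<exists>!(T, Y). is_source X C D T Y c)
    \<and> (\<forall>r'. representation_map X D r' \<longrightarrow>
          representation_map X C
            (\<lambda>c. if c \<in> D then r' c else (THE Y. \<exists>T. is_source X C D T Y c)))"
proof -
  interpret sauer_tight_pair X C D d
  proof
    show "finite X" "1 \<le> d" "D \<subseteq> C" by fact+
    show "sauer_tight X C d" using assms(3) by (rule maximum_class_imp_sauer_tight)
    show "sauer_tight X D (d - 1)" using assms(4) by (rule maximum_class_imp_sauer_tight)
  qed
  have "\<forall>c\<in>C - D. \<exists>!(T, Y). is_source X C D T Y c" using ex1_source by blast
  moreover have "representation_map X C (\<lambda>c. if c \<in> D then r' c else source_support X C D c)"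
    if "representation_map X D r'" for r'
    using that by (rule representation_map_extend)
  ultimately show ?thesis unfolding source_support_def by blast
qed

end
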